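(* Let $\mu>0$, $\sigma>0$, $r=\sigma/\mu$, and let $k$ be the unique real solution of $\frac1r=\frac12(3k+k^3)$. Let $\tilde\rho=\frac{1}{1-\frac32rk}$ and $p=\mu-k\sigma$. Then $\tilde\rho$ is the unique solution in $[1,\infty)$ of $\frac{27}{4}r^2=\frac{(\tilde\rho-1)^3}{\tilde\rho^2}$, and moreover $1+\frac{27}{4}r^2\le\tilde\rho\le3+\frac{27}{4}r^2$ and $p=\frac{\tilde\rho+2}{3\tilde\rho}\mu$. *)

theory Defs
  imports Complex_Main
begin

end

theory Submission
  imports Defs
begin

text \<open>Since \<open>k (3 + k\<^sup>2) = 2 / r > 0\<close>, the root \<open>k\<close> is positive and
  \<open>\<rho> = (3 + k\<^sup>2) / k\<^sup>2\<close>, so \<open>\<rho> - 1 = 3 / k\<^sup>2\<close> and the equation for \<open>\<rho>\<close> becomes a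
  rational identity in \<open>k\<close>. Uniqueness holds because \<open>x \<mapsto> (x - 1)\<^sup>3 / x\<^sup>2\<close> is strictly
  increasing on \<open>[1, \<infinity>)\<close>, and the bounds because it lies between \<open>x - 3\<close> and \<open>x - 1\<close>
  there. Finally \<open>p / \<mu> = 1 - r k\<close>, which \<open>1 / \<rho> = 1 - 3 r k / 2\<close> turns into
  \<open>(\<rho> + 2) / (3 \<rho>)\<close>.\<close>

lemma strict_mono_on_cube_over_square:
  "strict_mono_on {1::'a::linordered_field..} (\<lambda>x. (x - 1) ^ 3 / x ^ 2)"
proof (rule strict_mono_onI)
  fix x y :: 'a
  assume "x \<in> {1..}" "y \<in> {1..}" "x < y"
  then have x: "1 \<le> x" and xy: "x < y" by auto
  have "(x - 1) / x \<le> (y - 1) / y"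
    using x xy by (simp add: field_simps)
  then have "((x - 1) / x) ^ 2 \<le> ((y - 1) / y) ^ 2"
    using x by (intro power_mono) auto
  then have "(x - 1) * ((x - 1) / x) ^ 2 \<le> (x - 1) * ((y - 1) / y) ^ 2"
    using x by (intro mult_left_mono) auto
  also have "\<dots> < (y - 1) * ((y - 1) / y) ^ 2"
    using x xy by (intro mult_strict_right_mono) auto
  finally have "(x - 1) * ((x - 1) / x) ^ 2 < (y - 1) * ((y - 1) / y) ^ 2" .
  moreover have "\<And>z::'a. (z - 1) ^ 3 / z ^ 2 = (z - 1) * ((z - 1) / z) ^ 2"
    by (simp add: power_divide power2_eq_square power3_eq_cube)
  ultimately show "(x - 1) ^ 3 / x ^ 2 < (y - 1) ^ 3 / y ^ 2"
    by simp
qed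

lemma cube_over_square_bounds:
  fixes x :: "'a::linordered_field"
  assumes "1 \<le> x"
  shows "x - 3 \<le> (x - 1) ^ 3 / x ^ 2" and "(x - 1) ^ 3 / x ^ 2 \<le> x - 1"
proof -
  have "x ^ 2 > 0"
    using assms by simp
  moreover have "(x - 3) * x ^ 2 \<le> (x - 1) ^ 3"
    using assms by (simp add: power2_eq_square power3_eq_cube algebra_simps)
  moreover have "(x - 1) ^ 3 \<le> (x - 1) * x ^ 2"
    using assms mult_nonneg_nonneg[of "x - 1" "2 * x - 1"]
    by (simp add: power2_eq_square power3_eq_cube algebra_simps)
  ultimately show "x - 3 \<le> (x - 1) ^ 3 / x ^ 2" and "(x - 1) ^ 3 / x ^ 2 \<le> x - 1"
    by (simp_all add: pos_le_divide_eq pos_divide_le_eq)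
qed

lemma inverse_cubic_root:
  fixes r k :: real
  assumes "r > 0" and "1 / r = (3 * k + k ^ 3) / 2"
  shows "k > 0" and "r = 2 / (k * (3 + k ^ 2))"
proof -
  have factored: "k * (3 + k ^ 2) = 2 / r"
    using assms(2) by (simp add: field_simps power3_eq_cube power2_eq_square)
  moreover have "3 + k ^ 2 > 0"
    by (simp add: add_pos_nonneg)
  ultimately show "k > 0"
    using assms(1) by (metis zero_less_divide_iff zero_less_numeral zero_less_mult_pos2)
  show "r = 2 / (k * (3 + k ^ 2))"
    using factored assms(1) by simp
qed

lemma cubic_root_substitution:
  fixes k :: real
  assumes "k > 0"
  defines "r \<equiv> 2 / (k * (3 + k ^ 2))"
  shows "1 - 3 / 2 * r * k = k ^ 2 / (3 + k ^ 2)"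
    and "27 / 4 * r ^ 2 = (3 / k ^ 2) ^ 3 / ((3 + k ^ 2) / k ^ 2) ^ 2"
proof -
  have "3 + k ^ 2 > 0"
    by (simp add: add_pos_nonneg)
  moreover have "3 / 2 * r * k = 3 / (3 + k ^ 2)"
    using assms(1) by (simp add: r_def)
  ultimately show "1 - 3 / 2 * r * k = k ^ 2 / (3 + k ^ 2)"
    by (simp add: field_simps)
  show "27 / 4 * r ^ 2 = (3 / k ^ 2) ^ 3 / ((3 + k ^ 2) / k ^ 2) ^ 2"
    using assms(1) \<open>3 + k ^ 2 > 0\<close>
    by (simp add: r_def field_simps power2_eq_square power3_eq_cube)
qed

theorem lemma8:
  fixes \<mu> \<sigma> r k \<rho> p :: real
  assumes "\<mu> > 0" and "\<sigma> > 0"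
    and "r = \<sigma> / \<mu>"
    and "1 / r = (3 * k + k ^ 3) / 2"
    and "\<rho> = 1 / (1 - 3 / 2 * r * k)"
    and "p = \<mu> - k * \<sigma>"
  shows "\<rho> \<ge> 1 \<and> 27 / 4 * r ^ 2 = (\<rho> - 1) ^ 3 / \<rho> ^ 2
    \<and> (\<forall>x::real. x \<ge> 1 \<and> 27 / 4 * r ^ 2 = (x - 1) ^ 3 / x ^ 2 \<longrightarrow> x = \<rho>)
    \<and> 1 + 27 / 4 * r ^ 2 \<le> \<rho> \<and> \<rho> \<le> 3 + 27 / 4 * r ^ 2
    \<and> p = (\<rho> + 2) / (3 * \<rho>) * \<mu>"
proof -
  have "r > 0"
    using assms(1-3) by simp
  then have k: "k > 0" and r: "r = 2 / (k * (3 + k ^ 2))"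
    using assms(4) by (rule inverse_cubic_root)+
  have \<rho>: "\<rho> = (3 + k ^ 2) / k ^ 2"
    using assms(5) cubic_root_substitution(1)[OF k] by (simp add: r)
  have "\<rho> \<ge> 1"
    using k by (simp add: \<rho> field_simps)
  have "\<rho> - 1 = 3 / k ^ 2"
    using k by (simp add: \<rho> field_simps)
  then have eq: "27 / 4 * r ^ 2 = (\<rho> - 1) ^ 3 / \<rho> ^ 2"
    using cubic_root_substitution(2)[OF k] unfolding r by (simp only: \<rho>)
  have "1 / \<rho> = 1 - 3 / 2 * (r * k)"
    using assms(5) by simp
  then have "1 - r * k = (\<rho> + 2) / (3 * \<rho>)"
    using \<open>\<rho> \<ge> 1\<close> by (simp add: field_simps)
  moreover have "p = \<mu> * (1 - r * k)"
    using assms(1,3,6) by (simp add: algebra_simps)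
  ultimately have "p = (\<rho> + 2) / (3 * \<rho>) * \<mu>"
    by simp
  moreover have "1 + 27 / 4 * r ^ 2 \<le> \<rho>" and "\<rho> \<le> 3 + 27 / 4 * r ^ 2"
    using cube_over_square_bounds[OF \<open>\<rho> \<ge> 1\<close>] unfolding eq by linarith+
  moreover have "\<forall>x::real. x \<ge> 1 \<and> 27 / 4 * r ^ 2 = (x - 1) ^ 3 / x ^ 2 \<longrightarrow> x = \<rho>"
    using strict_mono_on_imp_inj_on[OF strict_mono_on_cube_over_square] \<open>\<rho> \<ge> 1\<close> eq
    by (auto simp: inj_on_def)
  ultimately show ?thesis
    using \<open>\<rho> \<ge> 1\<close> eq by blast
qed

end
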